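(* Let $1<p<\infty$ and let $c\colon\mathbb{R}^d\to\mathbb{R}$ be a cost satisfying the assumptions in the context. Let $\lambda,\mu$ be non-negative finite measures on $\mathbb{R}^d$ with $\lambda(\mathbb{R}^d)=\mu(\mathbb{R}^d)$, and let $\pi\in\Pi(\lambda,\mu)$ be a coupling whose support is $c$-cyclically monotone. There exists $\varepsilon_0>0$ depending only on $d,p,\Lambda$ such that if $E(4)+D(4)\le\varepsilon_0$, then for every $(x,y)\in\mathrm{Spt}\,\pi$ with $x\in B_3$ or $y\in B_3$, $$|x-y|\lesssim (E(4)+D(4))^{\frac{1}{p+d}}.$$ As a consequence, for $(x,y)\in\mathrm{Spt}\,\pi$ and $t\in[0,1]$: if $x\in B_3$ or $y\in B_3$, then $(1-t)x+ty\in B_4$.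
   Context: $c\colon\mathbb{R}^d\to\mathbb{R}$ is $C^1$ and there is $\Lambda\ge1$ such that for all $x,y\in\mathbb{R}^d$, $s\in[0,1]$: (i) $\Lambda^{-1}s(1-s)V_p(x,y)+c(sx+(1-s)y)\le s\,c(x)+(1-s)c(y)$ with $V_p(x,y)=(|x|^2+|y|^2)^{\frac{p-2}{2}}|x-y|^2$; (ii) $\Lambda^{-1}|x|^p\le c(x)\le\Lambda|x|^p$; (iii) $|c(x)-c(y)|\le\Lambda(|x|+|y|)^{p-1}|x-y|$; (iv) $|\nabla c(x)-\nabla c(y)|\le\Lambda(|x|+|y|)^{p-2}|x-y|$. A set $S\subset\mathbb{R}^d\times\mathbb{R}^d$ is $c$-cyclically monotone if for all $N$ and $(x_1,y_1),\dots,(x_N,y_N)\in S$, $\sum_i c(x_i-y_i)\le\sum_i c(x_i-y_{i+1})$ with $y_{N+1}=y_1$. $B_r$ is the open ball of radius $r$ at $0$; $\#_R=(B_R\times\mathbb{R}^d)\cup(\mathbb{R}^d\times B_R)$; $\kappa_{\lambda,R}=\lambda(B_R)/|B_R|$, $\kappa_{\mu,R}=\mu(B_R)/|B_R|$; $W_p^p(\alpha,\beta)=\inf_{\gamma\in\Pi(\alpha,\beta)}\int|x-y|^p\,\mathrm{d}\gamma$. Define $E(R)=\frac{1}{|B_R|}\int_{\#_R}c(x-y)\,\mathrm{d}\pi$ and $D(R)=\frac{1}{|B_R|}W_p^p(\lambda\llcorner B_R,\kappa_{\lambda,R}\,\mathrm{d}x\llcorner B_R)+\frac{R^p}{\kappa_{\lambda,R}^{p-1}}|\kappa_{\lambda,R}-1|^p+\frac{1}{|B_R|}W_p^p(\mu\llcorner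 B_R,\kappa_{\mu,R}\,\mathrm{d}x\llcorner B_R)+\frac{R^p}{\kappa_{\mu,R}^{p-1}}|\kappa_{\mu,R}-1|^p$. $A\lesssim B$ means $A\le CB$ with $C$ depending only on $d,p,\Lambda$. *)

theory Defs
  imports "HOL-Analysis.Analysis"
begin

definition Vp :: "real \<Rightarrow> 'a::euclidean_space \<Rightarrow> 'a \<Rightarrow> real" where
  "Vp p x y = (norm x ^ 2 + norm y ^ 2) powr ((p - 2) / 2) * norm (x - y) ^ 2"

definition cost_assms :: "real \<Rightarrow> real \<Rightarrow> ('a::euclidean_space \<Rightarrow> real) \<Rightarrow> ('a \<Rightarrow> 'a) \<Rightarrow> bool" where
  "cost_assms p \<Lambda> c g \<longleftrightarrow>
     (\<forall>x. (c has_derivative (\<lambda>h. g x \<bullet> h)) (at x)) \<and> continuous_on UNIV g \<and>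
     (\<forall>x y s. 0 \<le> s \<and> s \<le> 1 \<longrightarrow>
        s * (1 - s) * Vp p x y / \<Lambda> + c (s *\<^sub>R x + (1 - s) *\<^sub>R y) \<le> s * c x + (1 - s) * c y) \<and>
     (\<forall>x. norm x powr p / \<Lambda> \<le> c x \<and> c x \<le> \<Lambda> * norm x powr p) \<and>
     (\<forall>x y. \<bar>c x - c y\<bar> \<le> \<Lambda> * (norm x + norm y) powr (p - 1) * norm (x - y)) \<and>
     (\<forall>x y. norm (g x - g y) \<le> \<Lambda> * (norm x + norm y) powr (p - 2) * norm (x - y))"

definition c_cyclically_monotone :: "('a::real_vector \<Rightarrow> real) \<Rightarrow> ('a \<times> 'a) set \<Rightarrow> bool" where
  "c_cyclically_monotone c S \<longleftrightarrow>
     (\<forall>N::nat. \<forall>z :: nat \<Rightarrow> 'a \<times> 'a. N \<ge> 1 \<and> (\<forall>i<N. z i \<in> S) \<longrightarrow>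
        (\<Sum>i<N. c (fst (z i) - snd (z i))) \<le> (\<Sum>i<N. c (fst (z i) - snd (z ((i + 1) mod N)))))"

definition Spt :: "'a::metric_space measure \<Rightarrow> 'a set" where
  "Spt M = {z. \<forall>e>0. emeasure M (ball z e) > 0}"

definition couplings :: "'a::euclidean_space measure \<Rightarrow> 'a measure \<Rightarrow> ('a \<times> 'a) measure set" where
  "couplings \<alpha> \<beta> = {\<gamma>. sets \<gamma> = sets borel \<and> finite_measure \<gamma> \<and>
      distr \<gamma> borel fst = \<alpha> \<and> distr \<gamma> borel snd = \<beta>}"

text \<open>W_p^p(\<alpha>,\<beta>) (infimum over couplings; \<infinity> if there is none).\<close>
definition Wpp :: "real \<Rightarrow> 'a::euclidean_space measure \<Rightarrow> 'a measure \<Rightarrow> ennreal" where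
  "Wpp p \<alpha> \<beta> = (INF \<gamma>\<in>couplings \<alpha> \<beta>. \<integral>\<^sup>+ z. ennreal (norm (fst z - snd z) powr p) \<partial>\<gamma>)"

definition restr :: "'a measure \<Rightarrow> 'a set \<Rightarrow> 'a measure" where
  "restr M A = density M (indicator A)"

definition kappa :: "'a::euclidean_space measure \<Rightarrow> real \<Rightarrow> real" where
  "kappa M R = measure M (ball 0 R) / measure (lborel :: 'a measure) (ball 0 R)"

definition sharp :: "real \<Rightarrow> ('a::real_normed_vector \<times> 'a) set" where
  "sharp R = (ball 0 R \<times> UNIV) \<union> (UNIV \<times> ball 0 R)"

definition Eexc :: "('a::euclidean_space \<Rightarrow> real) \<Rightarrow> ('a \<times> 'a) measure \<Rightarrow> real \<Rightarrow> ennreal" where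
  "Eexc c \<pi> R = (\<integral>\<^sup>+ z\<in>sharp R. ennreal (c (fst z - snd z)) \<partial>\<pi>)
                  / ennreal (measure (lborel :: 'a measure) (ball 0 R))"

text \<open>The term R^p/\<kappa>^(p-1) |\<kappa>-1|^p, with the convention 1/0 = \<infinity> when \<kappa> = 0.\<close>
definition mass_term :: "real \<Rightarrow> real \<Rightarrow> real \<Rightarrow> ennreal" where
  "mass_term p R \<kappa> = (if \<kappa> = 0 then \<infinity> else ennreal (R powr p / \<kappa> powr (p - 1) * \<bar>\<kappa> - 1\<bar> powr p))"

definition Ddata_one :: "real \<Rightarrow> 'a::euclidean_space measure \<Rightarrow> real \<Rightarrow> ennreal" where
  "Ddata_one p M R =
     Wpp p (restr M (ball 0 R)) (density lborel (\<lambda>x. ennreal (kappa M R) * indicator (ball 0 R) x))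
       / ennreal (measure (lborel :: 'a measure) (ball 0 R))
     + mass_term p R (kappa M R)"

definition Ddata :: "real \<Rightarrow> 'a::euclidean_space measure \<Rightarrow> 'a measure \<Rightarrow> real \<Rightarrow> ennreal" where
  "Ddata p la mu R = Ddata_one p la R + Ddata_one p mu R"

end

theory Submission
  imports Defs
begin

(* Let (x, y) lie in the support with x in B_3 and put M = |x - y|. Testing cyclical
   monotonicity against (x, y) shows that every (x', y') in the support whose x' is within
   delta r of the point at distance r <= theta M from x towards y has |x' - y'| > theta M:
   moving the source towards the target gains about r M^(p-1) in cost, which a short
   displacement x' - y' cannot pay back. Smallness of D forces lambda to give mass about r^d
   to that ball, since otherwise transporting lambda to its average density on B_4 would be
   expensive; all of this mass travels a distance of order M, so E is at least of order
   M^p r^d, i.e. M^(p+d). The case y in B_3 is the same argument for the cost c(-z) with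
   the marginals exchanged. *)

section \<open>Consequences of the cost assumptions\<close>

(* The parts of (i)-(iii) that the argument uses; unlike cost_assms, this class is closed
   under c |-> c(-z), which exchanges source and target. *)
definition cost_growth_bounds :: "real \<Rightarrow> real \<Rightarrow> ('a::real_normed_vector \<Rightarrow> real) \<Rightarrow> bool" where
  "cost_growth_bounds p \<Lambda> c \<longleftrightarrow>
     (\<forall>x s. 0 \<le> s \<and> s \<le> 1 \<longrightarrow> c (s *\<^sub>R x) \<le> s * c x) \<and>
     (\<forall>x. norm x powr p / \<Lambda> \<le> c x) \<and>
     (\<forall>x y. \<bar>c x - c y\<bar> \<le> \<Lambda> * (norm x + norm y) powr (p - 1) * norm (x - y))"

lemma cost_assms_imp_cost_growth_bounds:
  assumes "cost_assms p \<Lambda> c g" and "0 \<le> \<Lambda>"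
  shows "cost_growth_bounds p \<Lambda> c"
proof -
  have convex: "\<And>x y s. 0 \<le> s \<Longrightarrow> s \<le> 1 \<Longrightarrow>
        s * (1 - s) * Vp p x y / \<Lambda> + c (s *\<^sub>R x + (1 - s) *\<^sub>R y) \<le> s * c x + (1 - s) * c y"
    and growth: "\<And>x. norm x powr p / \<Lambda> \<le> c x \<and> c x \<le> \<Lambda> * norm x powr p"
    and lip: "\<And>x y. \<bar>c x - c y\<bar> \<le> \<Lambda> * (norm x + norm y) powr (p - 1) * norm (x - y)"
    using assms(1) unfolding cost_assms_def by auto
  have "c (s *\<^sub>R x) \<le> s * c x" if "0 \<le> s" "s \<le> 1" for x :: 'a and s
  proof -
    have "c 0 = 0" using growth[of 0] by simp
    moreover have "0 \<le> s * (1 - s) * Vp p x 0 / \<Lambda>"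
      using that assms(2) by (simp add: Vp_def)
    ultimately show ?thesis using convex[OF that, of x 0] by simp
  qed
  then show ?thesis unfolding cost_growth_bounds_def using growth lip by blast
qed

lemma cost_growth_bounds_uminus:
  assumes "cost_growth_bounds p \<Lambda> c"
  shows "cost_growth_bounds p \<Lambda> (\<lambda>z. c (- z))"
proof -
  have "norm (- x - - y) = norm (x - y)" for x y :: 'a
    by (metis minus_diff_minus norm_minus_cancel)
  then show ?thesis using assms unfolding cost_growth_bounds_def
    by (metis norm_minus_cancel scaleR_minus_right)
qed

lemma cost_growth_bounds_ge:
  assumes "cost_growth_bounds p \<Lambda> c" "0 \<le> p" "0 \<le> \<Lambda>" "0 \<le> a" "a \<le> norm x"
  shows "a powr p / \<Lambda> \<le> c x"
proof -
  have "a powr p / \<Lambda> \<le> norm x powr p / \<Lambda>"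
    using assms(2-5) by (intro divide_right_mono powr_mono2) auto
  also have "\<dots> \<le> c x" using assms(1) unfolding cost_growth_bounds_def by blast
  finally show ?thesis .
qed

lemma c_cyclically_monotone_pair:
  assumes "c_cyclically_monotone c S" "a \<in> S" "b \<in> S"
  shows "c (fst a - snd a) + c (fst b - snd b) \<le> c (fst a - snd b) + c (fst b - snd a)"
proof -
  define z where "z = (\<lambda>i::nat. if i = 0 then a else b)"
  have "(\<Sum>i<2. c (fst (z i) - snd (z i))) \<le> (\<Sum>i<2. c (fst (z i) - snd (z ((i + 1) mod 2))))"
    using assms unfolding c_cyclically_monotone_def
    by (erule_tac x=2 in allE, erule_tac x=z in allE) (auto simp: z_def)
  then show ?thesis by (simp add: numeral_2_eq_2 z_def)
qed

lemma cost_gain_toward_target: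
  fixes z w :: "'a::real_normed_vector"
  assumes c: "cost_growth_bounds p \<Lambda> c" and p: "1 < p" and \<Lambda>: "1 \<le> \<Lambda>"
    and M: "norm z = M" "0 < M" and r: "0 < r" "r \<le> M"
    and \<delta>: "0 < \<delta>" "\<delta> \<le> 1" "\<Lambda> * 3 powr (p - 1) * \<delta> \<le> 1 / (2 * \<Lambda>)"
    and w: "norm w < \<delta> * r"
  shows "r * M powr (p - 1) / (2 * \<Lambda>) \<le> c z - c ((1 - r / M) *\<^sub>R z + w)"
proof -
  define s where "s = 1 - r / M"
  define Q where "Q = r * M powr (p - 1) / (2 * \<Lambda>)"
  have s: "0 \<le> s" "s \<le> 1" using r M by (auto simp: s_def field_simps)
  have homog: "c (s *\<^sub>R z) \<le> s * c z" and low: "M powr p / \<Lambda> \<le> c z"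
    using c s M unfolding cost_growth_bounds_def by auto
  have "M powr p = M * M powr (p - 1)" using M by (simp add: powr_mult_base)
  then have "2 * Q = (1 - s) * (M powr p / \<Lambda>)"
    using M by (simp add: Q_def s_def field_simps)
  also have "\<dots> \<le> (1 - s) * c z" using low s by (intro mult_left_mono) auto
  also have "\<dots> \<le> c z - c (s *\<^sub>R z)" using homog by (simp add: algebra_simps)
  finally have gain: "2 * Q \<le> c z - c (s *\<^sub>R z)" .
  have nsz: "norm (s *\<^sub>R z) \<le> M" using s M mult_right_mono[of s 1 M] by simp
  have "\<delta> * r \<le> M" using \<delta> r mult_right_mono[of \<delta> 1 r] by linarith
  then have "norm (s *\<^sub>R z + w) \<le> 2 * M"
    using nsz w norm_triangle_ineq[of "s *\<^sub>R z" w] by simp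
  then have "(norm (s *\<^sub>R z + w) + norm (s *\<^sub>R z)) powr (p - 1) \<le> (3 * M) powr (p - 1)"
    using nsz p by (intro powr_mono2) auto
  then have "\<bar>c (s *\<^sub>R z + w) - c (s *\<^sub>R z)\<bar> \<le> \<Lambda> * (3 * M) powr (p - 1) * (\<delta> * r)"
    using c \<Lambda> w unfolding cost_growth_bounds_def
    by (smt (verit) add_diff_cancel_left' mult_mono mult_nonneg_nonneg norm_ge_zero powr_ge_zero)
  also have "\<dots> = (\<Lambda> * 3 powr (p - 1) * \<delta>) * (r * M powr (p - 1))"
    using M by (simp add: powr_mult)
  also have "\<dots> \<le> Q"
    using mult_right_mono[OF \<delta>(3), of "r * M powr (p - 1)"] r by (simp add: Q_def)
  finally have "c (s *\<^sub>R z + w) - c (s *\<^sub>R z) \<le> Q" by (rule abs_le_D1)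
  with gain have "Q \<le> c z - c (s *\<^sub>R z + w)" by linarith
  then show ?thesis by (simp add: Q_def s_def)
qed

lemma cost_loss_small_shift:
  fixes h v :: "'a::real_normed_vector"
  assumes c: "cost_growth_bounds p \<Lambda> c" and p: "1 < p" and \<Lambda>: "1 \<le> \<Lambda>"
    and \<theta>: "0 < \<theta>" "(4 * \<theta>) powr (p - 1) * (2 * \<Lambda>) < 1 / (2 * \<Lambda>)"
    and M: "0 < M" and r: "0 < r" "r \<le> \<theta> * M"
    and h: "norm h \<le> 2 * r" and v: "norm v \<le> \<theta> * M"
  shows "c (h + v) - c v < r * M powr (p - 1) / (2 * \<Lambda>)"
proof -
  have "norm (h + v) + norm v \<le> 4 * \<theta> * M"
    using h v r norm_triangle_ineq[of h v] by linarith
  then have "(norm (h + v) + norm v) powr (p - 1) \<le> (4 * \<theta> * M) powr (p - 1)"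
    using p by (intro powr_mono2) auto
  then have "c (h + v) - c v \<le> \<Lambda> * (4 * \<theta> * M) powr (p - 1) * (2 * r)"
    using c \<Lambda> h unfolding cost_growth_bounds_def
    by (smt (verit) add_diff_cancel_right' mult_mono mult_nonneg_nonneg norm_ge_zero powr_ge_zero)
  also have "\<dots> = ((4 * \<theta>) powr (p - 1) * (2 * \<Lambda>)) * (r * M powr (p - 1))"
    using M \<theta> by (simp add: powr_mult)
  also have "\<dots> < r * M powr (p - 1) / (2 * \<Lambda>)"
    using mult_strict_right_mono[OF \<theta>(2), of "r * M powr (p - 1)"] r M by simp
  finally show ?thesis .
qed

lemma c_monotone_pair_long_displacement:
  fixes x0 y0 x y :: "'a::real_normed_vector"
  assumes c: "cost_growth_bounds p \<Lambda> c" and p: "1 < p" and \<Lambda>: "1 \<le> \<Lambda>"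
    and mono: "c (x0 - y0) + c (x - y) \<le> c (x0 - y) + c (x - y0)"
    and M: "norm (x0 - y0) = M" "0 < M" and r: "0 < r" "r \<le> \<theta> * M"
    and \<theta>: "0 < \<theta>" "\<theta> \<le> 1/4" "(4 * \<theta>) powr (p - 1) * (2 * \<Lambda>) < 1 / (2 * \<Lambda>)"
    and \<delta>: "0 < \<delta>" "\<delta> \<le> 1" "\<Lambda> * 3 powr (p - 1) * \<delta> \<le> 1 / (2 * \<Lambda>)"
    and x: "norm (x - (x0 + (r / M) *\<^sub>R (y0 - x0))) < \<delta> * r"
  shows "\<theta> * M < norm (x - y)"
proof (rule ccontr)
  assume "\<not> \<theta> * M < norm (x - y)"
  then have v: "norm (x - y) \<le> \<theta> * M" by simp
  define w where "w = x - (x0 + (r / M) *\<^sub>R (y0 - x0))"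
  have "r \<le> M" using r \<theta> M mult_right_mono[of \<theta> 1 M] by linarith
  then have "r * M powr (p - 1) / (2 * \<Lambda>) \<le> c (x0 - y0) - c ((1 - r / M) *\<^sub>R (x0 - y0) + w)"
    using cost_gain_toward_target[OF c p \<Lambda> M r(1) _ \<delta>] x by (simp add: w_def)
  moreover have "(1 - r / M) *\<^sub>R (x0 - y0) + w = x - y0"
    by (simp add: w_def algebra_simps)
  moreover have "norm (x0 - x) \<le> 2 * r"
  proof -
    have "x0 - x = - ((r / M) *\<^sub>R (y0 - x0)) - w" by (simp add: w_def algebra_simps)
    then have "norm (x0 - x) \<le> r + norm w"
      using M r norm_triangle_ineq4[of "- ((r / M) *\<^sub>R (y0 - x0))" w]
      by (simp add: norm_minus_commute)
    moreover have "\<delta> * r \<le> r" using \<delta> r mult_right_mono[of \<delta> 1 r] by simp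
    ultimately show ?thesis using x by (simp add: w_def)
  qed
  then have "c ((x0 - x) + (x - y)) - c (x - y) < r * M powr (p - 1) / (2 * \<Lambda>)"
    using cost_loss_small_shift[OF c p \<Lambda> \<theta>(1,3) M(2) r _ v] by blast
  ultimately show False using mono by simp
qed

section \<open>Measure-theoretic estimates\<close>

lemma AE_in_Spt:
  fixes M :: "'b::{metric_space,second_countable_topology} measure"
  assumes "sets M = sets borel"
  shows "AE z in M. z \<in> Spt M"
proof -
  define F where "F = {ball z e | z e. 0 < e \<and> emeasure M (ball z e) = 0}"
  have "open S" if "S \<in> F" for S using that unfolding F_def by auto
  then obtain F' where F': "F' \<subseteq> F" "countable F'" "\<Union>F' = \<Union>F"
    using Lindelof by blast
  have "UNIV - Spt M = \<Union>F"
  proof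
    show "UNIV - Spt M \<subseteq> \<Union>F"
    proof
      fix z assume "z \<in> UNIV - Spt M"
      then obtain e where "0 < e" "emeasure M (ball z e) = 0"
        unfolding Spt_def by (auto simp: not_gr_zero)
      then show "z \<in> \<Union>F" unfolding F_def using centre_in_ball by blast
    qed
    show "\<Union>F \<subseteq> UNIV - Spt M"
    proof
      fix w assume "w \<in> \<Union>F"
      then obtain z e where null: "emeasure M (ball z e) = 0" and w: "w \<in> ball z e"
        unfolding F_def by blast
      obtain e' where "0 < e'" "ball w e' \<subseteq> ball z e"
        using openE[OF open_ball w] .
      with null have "\<not> 0 < emeasure M (ball w e')"
        using emeasure_mono[of "ball w e'" "ball z e" M] assms by simp
      with \<open>0 < e'\<close> show "w \<in> UNIV - Spt M" unfolding Spt_def by blast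
    qed
  qed
  moreover have "(\<Union>S\<in>F'. S) \<in> null_sets M"
  proof (rule null_sets_UN')
    show "countable F'" by fact
    fix S assume "S \<in> F'"
    then show "S \<in> null_sets M" using F'(1) assms unfolding F_def by (auto simp: null_sets_def)
  qed
  ultimately have "UNIV - Spt M \<in> null_sets M" using F'(3) by simp
  then show ?thesis using AE_not_in by fastforce
qed

lemma emeasure_distr_le_set_nn_integral:
  fixes \<pi> :: "'b::topological_space measure" and P :: "'b \<Rightarrow> 'c::topological_space"
  assumes \<pi>: "sets \<pi> = sets borel" and P: "P \<in> borel_measurable borel" and A: "A \<in> sets borel"
    and bound: "AE u in \<pi>. P u \<in> A \<longrightarrow> u \<in> S \<and> L \<le> f u"
  shows "ennreal L * emeasure (distr \<pi> borel P) A \<le> (\<integral>\<^sup>+ u\<in>S. ennreal (f u) \<partial>\<pi>)"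
proof -
  have space: "space \<pi> = UNIV" using \<pi> sets_eq_imp_space_eq by fastforce
  have P': "P \<in> borel_measurable \<pi>" using P measurable_cong_sets[OF \<pi> refl] by blast
  have "P -` A \<in> sets \<pi>" using measurable_sets[OF P' A] space by simp
  moreover have "emeasure (distr \<pi> borel P) A = emeasure \<pi> (P -` A)"
    using emeasure_distr[OF P' A] space by simp
  ultimately have "ennreal L * emeasure (distr \<pi> borel P) A = (\<integral>\<^sup>+ u. ennreal L * indicator (P -` A) u \<partial>\<pi>)"
    by (simp add: nn_integral_cmult_indicator)
  also have "\<dots> \<le> (\<integral>\<^sup>+ u. ennreal (f u) * indicator S u \<partial>\<pi>)"
    using bound by (intro nn_integral_mono_AE) (auto elim!: AE_mp simp: indicator_def ennreal_leI)
  finally show ?thesis by simp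
qed

lemma coupling_emeasure_ball_le:
  fixes \<alpha> \<beta> :: "'a::euclidean_space measure"
  assumes "\<gamma> \<in> couplings \<alpha> \<beta>"
  shows "emeasure \<beta> (ball z s) \<le> emeasure \<alpha> (ball z (s + \<rho>)) + emeasure \<gamma> {u. \<rho> \<le> norm (fst u - snd u)}"
proof -
  have sets: "sets \<gamma> = sets borel" and \<alpha>: "\<alpha> = distr \<gamma> borel fst" and \<beta>: "\<beta> = distr \<gamma> borel snd"
    using assms unfolding couplings_def by auto
  have space: "space \<gamma> = UNIV" using sets sets_eq_imp_space_eq by fastforce
  have fst: "fst \<in> borel_measurable \<gamma>" and snd: "snd \<in> borel_measurable \<gamma>"
    unfolding measurable_cong_sets[OF sets refl]
    by (intro borel_measurable_continuous_onI continuous_on_fst continuous_on_snd continuous_on_id)+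
  define Far where "Far = {u :: 'a \<times> 'a. \<rho> \<le> norm (fst u - snd u)}"
  have Far: "Far \<in> sets \<gamma>"
    using sets unfolding Far_def by (simp add: closed_Collect_le continuous_intros)
  have near: "fst -` ball z (s + \<rho>) \<in> sets \<gamma>"
    using measurable_sets[OF fst, of "ball z (s + \<rho>)"] space by simp
  have "snd -` ball z s \<subseteq> fst -` ball z (s + \<rho>) \<union> Far"
  proof
    fix u :: "'a \<times> 'a" assume "u \<in> snd -` ball z s"
    moreover have "dist z (fst u) \<le> dist z (snd u) + norm (fst u - snd u)"
      using dist_triangle[of z "fst u" "snd u"] by (simp add: dist_norm norm_minus_commute)
    ultimately show "u \<in> fst -` ball z (s + \<rho>) \<union> Far" unfolding Far_def by auto
  qed
  then have "emeasure \<gamma> (snd -` ball z s) \<le> emeasure \<gamma> (fst -` ball z (s + \<rho>) \<union> Far)"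
    using Far near by (intro emeasure_mono) auto
  also have "\<dots> \<le> emeasure \<gamma> (fst -` ball z (s + \<rho>)) + emeasure \<gamma> Far"
    using near Far by (rule emeasure_subadditive)
  finally show ?thesis
    using emeasure_distr[OF fst] emeasure_distr[OF snd] space by (simp add: \<alpha> \<beta> Far_def)
qed

lemma emeasure_ball_le_transport:
  fixes \<alpha> \<beta> :: "'a::euclidean_space measure"
  assumes W: "Wpp p \<alpha> \<beta> < \<eta>" and p: "0 < p" and \<rho>: "0 < \<rho>"
  shows "ennreal (\<rho> powr p) * emeasure \<beta> (ball z s)
           \<le> ennreal (\<rho> powr p) * emeasure \<alpha> (ball z (s + \<rho>)) + \<eta>"
proof -
  obtain \<gamma> where \<gamma>: "\<gamma> \<in> couplings \<alpha> \<beta>"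
    and cost: "(\<integral>\<^sup>+ u. ennreal (norm (fst u - snd u) powr p) \<partial>\<gamma>) < \<eta>"
    using W unfolding Wpp_def by (auto simp: INF_less_iff)
  define Far where "Far = {u :: 'a \<times> 'a. \<rho> \<le> norm (fst u - snd u)}"
  have "Far \<in> sets \<gamma>"
    using \<gamma> unfolding Far_def couplings_def by (simp add: closed_Collect_le continuous_intros)
  then have "ennreal (\<rho> powr p) * emeasure \<gamma> Far = (\<integral>\<^sup>+ u. ennreal (\<rho> powr p) * indicator Far u \<partial>\<gamma>)"
    by (simp add: nn_integral_cmult_indicator)
  also have "\<dots> \<le> (\<integral>\<^sup>+ u. ennreal (norm (fst u - snd u) powr p) \<partial>\<gamma>)"
    using \<rho> p by (intro nn_integral_mono) (auto simp: indicator_def Far_def intro!: ennreal_leI powr_mono2)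
  finally have far: "ennreal (\<rho> powr p) * emeasure \<gamma> Far \<le> \<eta>" using cost by simp
  have "ennreal (\<rho> powr p) * emeasure \<beta> (ball z s)
          \<le> ennreal (\<rho> powr p) * (emeasure \<alpha> (ball z (s + \<rho>)) + emeasure \<gamma> Far)"
    using coupling_emeasure_ball_le[OF \<gamma>] unfolding Far_def by (rule mult_left_mono) simp
  also have "\<dots> \<le> ennreal (\<rho> powr p) * emeasure \<alpha> (ball z (s + \<rho>)) + \<eta>"
    using far by (simp add: distrib_left add_left_mono)
  finally show ?thesis .
qed

lemma emeasure_restr_subset:
  assumes "sets \<nu> = sets borel" "A \<subseteq> B" "A \<in> sets borel" "B \<in> sets borel"
  shows "emeasure (restr \<nu> B) A = emeasure \<nu> A"
proof -
  have "emeasure (restr \<nu> B) A = (\<integral>\<^sup>+ x. indicator B x * indicator A x \<partial>\<nu>)"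
    unfolding restr_def using assms(1,3,4)
    by (subst emeasure_density) (simp_all add: measurable_cong_sets[OF assms(1) refl] borel_measurable_indicator)
  also have "\<dots> = (\<integral>\<^sup>+ x. indicator A x \<partial>\<nu>)"
    using assms(2) by (intro nn_integral_cong) (auto simp: indicator_def)
  finally show ?thesis using assms(1,3) by simp
qed

lemma emeasure_density_indicator_subset:
  assumes "A \<subseteq> B" "A \<in> sets borel" "B \<in> sets borel"
  shows "emeasure (density lborel (\<lambda>x. ennreal \<kappa> * indicator B x)) A = ennreal \<kappa> * emeasure lborel A"
proof -
  have "emeasure (density lborel (\<lambda>x. ennreal \<kappa> * indicator B x)) A
          = (\<integral>\<^sup>+ x. ennreal \<kappa> * indicator A x \<partial>lborel)"
    using assms by (subst emeasure_density) (auto intro!: nn_integral_cong simp: indicator_def)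
  then show ?thesis using assms(2) by (simp add: nn_integral_cmult_indicator)
qed

lemma ennreal_le_mult_if_divide_le:
  assumes "x / ennreal b \<le> ennreal e" "0 < b" "0 \<le> e"
  shows "x \<le> ennreal (e * b)"
proof -
  have "x = x / ennreal b * ennreal b" using assms(2) by (simp add: ennreal_divide_times)
  also have "\<dots> \<le> ennreal e * ennreal b" using assms(1) by (rule mult_right_mono) simp
  finally show ?thesis using assms(3) by (simp add: ennreal_mult')
qed

lemma kappa_ge_half_if_mass_term_le:
  assumes mt: "mass_term p R \<kappa> \<le> ennreal \<epsilon>" and \<epsilon>: "0 \<le> \<epsilon>" "\<epsilon> \<le> 1"
    and \<kappa>: "0 \<le> \<kappa>" and p: "1 < p" and R: "2 < R"
  shows "1/2 \<le> \<kappa>"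
proof (rule ccontr)
  assume "\<not> 1/2 \<le> \<kappa>"
  then have \<kappa>2: "\<kappa> < 1/2" by simp
  have "\<kappa> \<noteq> 0" using mt unfolding mass_term_def by (auto simp: top_unique)
  then have "0 < \<kappa>" using \<kappa> by simp
  have "1 < (R / 2) powr p" using R p by simp
  also have "\<dots> = R powr p * (1/2) powr p" using R by (simp add: powr_divide)
  also have "\<dots> \<le> R powr p / \<kappa> powr (p - 1) * \<bar>\<kappa> - 1\<bar> powr p"
  proof (intro mult_mono)
    have "\<kappa> powr (p - 1) \<le> 1" using \<open>0 < \<kappa>\<close> \<kappa>2 p by (simp add: powr_le1)
    then show "R powr p \<le> R powr p / \<kappa> powr (p - 1)"
      using \<open>0 < \<kappa>\<close> by (simp add: le_divide_eq mult_left_le)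
    show "(1/2) powr p \<le> \<bar>\<kappa> - 1\<bar> powr p" using \<kappa>2 p by (intro powr_mono2) auto
  qed auto
  also have "\<dots> \<le> \<epsilon>" using mt \<open>\<kappa> \<noteq> 0\<close> \<epsilon> unfolding mass_term_def by simp
  finally show False using \<epsilon> by simp
qed

lemma Ddata_one_le_imp_kappa_Wpp_bounds:
  fixes \<nu> :: "'a::euclidean_space measure"
  assumes D: "Ddata_one p \<nu> R \<le> ennreal \<epsilon>" and \<epsilon>: "0 \<le> \<epsilon>" "\<epsilon> \<le> 1" and p: "1 < p" and R: "2 < R"
  shows "1/2 \<le> kappa \<nu> R"
    and "Wpp p (restr \<nu> (ball 0 R)) (density lborel (\<lambda>x. ennreal (kappa \<nu> R) * indicator (ball 0 R) x))
           \<le> ennreal (\<epsilon> * measure lborel (ball (0::'a) R))"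
proof -
  define W where "W = Wpp p (restr \<nu> (ball 0 R))
    (density lborel (\<lambda>x. ennreal (kappa \<nu> R) * indicator (ball (0::'a) R) x))"
  define Bm where "Bm = measure lborel (ball (0::'a) R)"
  have D: "W / ennreal Bm + mass_term p R (kappa \<nu> R) \<le> ennreal \<epsilon>"
    using D unfolding Ddata_one_def W_def Bm_def .
  have "mass_term p R (kappa \<nu> R) \<le> W / ennreal Bm + mass_term p R (kappa \<nu> R)"
    and "W / ennreal Bm \<le> W / ennreal Bm + mass_term p R (kappa \<nu> R)"
    by (simp_all add: add_increasing add_increasing2)
  note split = this[THEN order_trans, OF D]
  show "1/2 \<le> kappa \<nu> R"
    using kappa_ge_half_if_mass_term_le[OF split(1) \<epsilon> _ p R] by (simp add: kappa_def)
  have "0 < Bm" using R by (simp add: Bm_def content_ball_pos)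
  with split(2) show "W \<le> ennreal (\<epsilon> * Bm)" using \<epsilon>(1) by (rule ennreal_le_mult_if_divide_le)
qed

lemma Ddata_one_le_imp_measure_ball_ge:
  fixes \<nu> :: "'a::euclidean_space measure"
  assumes \<nu>: "sets \<nu> = sets borel" "finite_measure \<nu>"
    and D: "Ddata_one p \<nu> R \<le> ennreal \<epsilon>" and \<epsilon>: "0 \<le> \<epsilon>" "\<epsilon> \<le> 1"
    and p: "1 < p" and R: "2 < R" and \<rho>: "0 < \<rho>" and sub: "ball z (2 * \<rho>) \<subseteq> ball 0 R"
  shows "unit_ball_vol DIM('a) * \<rho> ^ DIM('a) / 2 - \<epsilon> * measure lborel (ball (0::'a) R) / \<rho> powr p
           \<le> measure \<nu> (ball z (2 * \<rho>))"
proof -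
  define Bm where "Bm = measure lborel (ball (0::'a) R)"
  define \<omega> where "\<omega> = unit_ball_vol DIM('a)"
  define \<kappa> where "\<kappa> = kappa \<nu> R"
  note \<kappa> = Ddata_one_le_imp_kappa_Wpp_bounds(1)[OF D \<epsilon> p R, folded \<kappa>_def]
    and W = Ddata_one_le_imp_kappa_Wpp_bounds(2)[OF D \<epsilon> p R, folded \<kappa>_def Bm_def]
  have "ball z \<rho> \<subseteq> ball 0 R" using sub \<rho> by (smt (verit) subset_ball order_trans)
  then have \<beta>B: "emeasure (density lborel (\<lambda>x. ennreal \<kappa> * indicator (ball 0 R) x)) (ball z \<rho>)
                   = ennreal (\<kappa> * (\<omega> * \<rho> ^ DIM('a)))"
    using \<rho> \<kappa> by (simp add: emeasure_density_indicator_subset emeasure_ball \<omega>_def ennreal_mult)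
  have \<nu>B: "emeasure (restr \<nu> (ball 0 R)) (ball z (2 * \<rho>)) = ennreal (measure \<nu> (ball z (2 * \<rho>)))"
    using sub \<nu> by (simp add: emeasure_restr_subset finite_measure.emeasure_eq_measure)
  have "\<rho> powr p * (\<kappa> * (\<omega> * \<rho> ^ DIM('a)) - measure \<nu> (ball z (2 * \<rho>))) \<le> \<eta>"
    if "\<epsilon> * Bm < \<eta>" for \<eta>
  proof -
    have "0 \<le> \<epsilon> * Bm" using \<epsilon> by (simp add: Bm_def)
    then have "0 \<le> \<eta>" and "ennreal (\<epsilon> * Bm) < ennreal \<eta>" using that by (auto intro: ennreal_lessI)
    with W have "Wpp p (restr \<nu> (ball 0 R)) (density lborel (\<lambda>x. ennreal \<kappa> * indicator (ball 0 R) x)) < ennreal \<eta>"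
      using order_le_less_trans by blast
    from emeasure_ball_le_transport[OF this _ \<rho>, of z \<rho>, unfolded mult_2[symmetric]] p
    have "ennreal (\<rho> powr p * (\<kappa> * (\<omega> * \<rho> ^ DIM('a))))
            \<le> ennreal (\<rho> powr p * measure \<nu> (ball z (2 * \<rho>)) + \<eta>)"
      using \<beta>B \<nu>B \<open>0 \<le> \<eta>\<close> by (simp add: ennreal_mult'[symmetric] ennreal_plus)
    then show ?thesis using \<open>0 \<le> \<eta>\<close> by (subst (asm) ennreal_le_iff) (auto simp: algebra_simps)
  qed
  then have "\<rho> powr p * (\<kappa> * (\<omega> * \<rho> ^ DIM('a)) - measure \<nu> (ball z (2 * \<rho>))) \<le> \<epsilon> * Bm"
    by (rule dense_ge)
  then have "\<kappa> * (\<omega> * \<rho> ^ DIM('a)) - measure \<nu> (ball z (2 * \<rho>)) \<le> \<epsilon> * Bm / \<rho> powr p"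
    using \<rho> by (simp add: le_divide_eq mult.commute)
  moreover have "\<omega> * \<rho> ^ DIM('a) / 2 \<le> \<kappa> * (\<omega> * \<rho> ^ DIM('a))"
    using \<kappa> \<rho> by (simp add: \<omega>_def mult_right_mono)
  ultimately show ?thesis unfolding Bm_def \<omega>_def by linarith
qed

section \<open>The displacement bound\<close>

(* The constants of the two alternatives of ball_mass_dichotomy at the test radius
   r = min (theta M) (1/2); below the threshold neither alternative can hold when r = 1/2. *)
definition displacement_const :: "real \<Rightarrow> real \<Rightarrow> real \<Rightarrow> real \<Rightarrow> nat \<Rightarrow> real" where
  "displacement_const p \<Lambda> \<theta> \<delta> n =
     max (4 * 4 ^ n / (\<delta> * \<theta> / 2) powr (p + n)) (4 * 4 ^ n * \<Lambda> / (\<theta> powr p * (\<delta> * \<theta> / 2) powr n))"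

definition excess_threshold :: "real \<Rightarrow> real \<Rightarrow> real \<Rightarrow> nat \<Rightarrow> real" where
  "excess_threshold p \<Lambda> \<delta> n =
     min ((\<delta> / 4) powr (p + n) / (4 * 4 ^ n)) ((1/2) powr p * (\<delta> / 4) powr n / (4 * 4 ^ n * \<Lambda>))"

lemma displacement_const_pos: "0 < \<theta> \<Longrightarrow> 0 < \<delta> \<Longrightarrow> 0 < displacement_const p \<Lambda> \<theta> \<delta> n"
  by (simp add: displacement_const_def less_max_iff_disj)

lemma excess_threshold_pos: "0 < \<delta> \<Longrightarrow> 0 < \<Lambda> \<Longrightarrow> 0 < excess_threshold p \<Lambda> \<delta> n"
  by (simp add: excess_threshold_def)

lemma ball_mass_dichotomy:
  fixes \<omega> \<rho> L m B \<epsilon> d p :: real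
  assumes "0 < \<omega>" "0 < \<rho>" "0 \<le> L"
    and mass: "\<omega> * \<rho> powr d / 2 - \<epsilon> * (\<omega> * B) / \<rho> powr p \<le> m"
    and excess: "L * m \<le> \<epsilon> * (\<omega> * B)"
  shows "\<rho> powr (p + d) \<le> 4 * B * \<epsilon> \<or> L * \<rho> powr d \<le> 4 * B * \<epsilon>"
proof (cases "\<omega> * \<rho> powr d / 4 \<le> \<epsilon> * (\<omega> * B) / \<rho> powr p")
  case True
  then have "\<omega> * (\<rho> powr p * \<rho> powr d) \<le> \<omega> * (4 * B * \<epsilon>)"
    using assms by (simp add: field_simps)
  then show ?thesis using assms by (simp add: powr_add)
next
  case False
  then have "L * (\<omega> * \<rho> powr d / 4) \<le> L * m" using mass assms by (intro mult_left_mono) auto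
  then have "\<omega> * (L * \<rho> powr d) \<le> \<omega> * (4 * B * \<epsilon>)" using excess by (simp add: field_simps)
  then show ?thesis using assms by simp
qed

lemma Ddata_one_le_imp_ball_dichotomy:
  fixes \<nu> :: "'a::euclidean_space measure"
  assumes \<nu>: "sets \<nu> = sets borel" "finite_measure \<nu>"
    and D: "Ddata_one p \<nu> 4 \<le> ennreal \<epsilon>" and \<epsilon>: "0 \<le> \<epsilon>" "\<epsilon> \<le> 1" and p: "1 < p"
    and \<rho>: "0 < \<rho>" and sub: "ball z (2 * \<rho>) \<subseteq> ball 0 4" and L: "0 \<le> L"
    and excess: "L * measure \<nu> (ball z (2 * \<rho>)) \<le> \<epsilon> * measure lborel (ball (0::'a) 4)"
  shows "\<rho> powr (p + DIM('a)) \<le> 4 * 4 ^ DIM('a) * \<epsilon> \<or> L * \<rho> powr DIM('a) \<le> 4 * 4 ^ DIM('a) * \<epsilon>"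
proof -
  have \<omega>: "0 < unit_ball_vol DIM('a)" by simp
  have Bm: "measure lborel (ball (0::'a) 4) = unit_ball_vol DIM('a) * 4 ^ DIM('a)"
    by (simp add: content_ball)
  have "unit_ball_vol DIM('a) * \<rho> powr DIM('a) / 2 - \<epsilon> * (unit_ball_vol DIM('a) * 4 ^ DIM('a)) / \<rho> powr p
          \<le> measure \<nu> (ball z (2 * \<rho>))"
    using Ddata_one_le_imp_measure_ball_ge[OF \<nu> D \<epsilon> p _ \<rho> sub] \<rho> by (simp add: Bm powr_realpow)
  from ball_mass_dichotomy[OF \<omega> \<rho> L this excess[unfolded Bm]] show ?thesis .
qed

lemma displacement_power_le:
  fixes n :: nat
  assumes M: "0 < M" and \<theta>: "0 < \<theta>" and \<delta>: "0 < \<delta>" and \<Lambda>: "0 < \<Lambda>" and p: "0 \<le> p"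
    and \<epsilon>: "0 \<le> \<epsilon>" "\<epsilon> < excess_threshold p \<Lambda> \<delta> n"
    and r: "r = min (\<theta> * M) (1/2)"
    and alt: "(\<delta> * r / 2) powr (p + n) \<le> 4 * 4 ^ n * \<epsilon>
              \<or> (\<theta> * M) powr p / \<Lambda> * (\<delta> * r / 2) powr n \<le> 4 * 4 ^ n * \<epsilon>"
  shows "M powr (p + n) \<le> displacement_const p \<Lambda> \<theta> \<delta> n * \<epsilon>"
proof (cases "\<theta> * M \<le> 1/2")
  case True
  define c0 where "c0 = \<delta> * \<theta> / 2"
  have c0: "0 < c0" using \<delta> \<theta> by (simp add: c0_def)
  have \<rho>: "\<delta> * r / 2 = c0 * M" using True by (simp add: r c0_def)
  have "M powr (p + n) \<le> 4 * 4 ^ n / c0 powr (p + n) * \<epsilon>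
        \<or> M powr (p + n) \<le> 4 * 4 ^ n * \<Lambda> / (\<theta> powr p * c0 powr n) * \<epsilon>"
    using alt c0 M \<theta> \<Lambda> unfolding \<rho>
    by (auto simp: powr_mult powr_add field_simps)
  then show ?thesis
    unfolding displacement_const_def c0_def[symmetric]
    by (smt (verit) \<epsilon>(1) max.cobounded1 max.cobounded2 mult_right_mono)
next
  case False
  then have \<rho>: "\<delta> * r / 2 = \<delta> / 4" by (simp add: r)
  have "(1/2) powr p \<le> (\<theta> * M) powr p" using False p by (intro powr_mono2) auto
  then have "(1/2) powr p / \<Lambda> * (\<delta> / 4) powr n \<le> (\<theta> * M) powr p / \<Lambda> * (\<delta> / 4) powr n"
    using \<Lambda> by (intro mult_right_mono divide_right_mono) auto
  then have "(\<delta> / 4) powr (p + n) \<le> 4 * 4 ^ n * \<epsilon> \<or> (1/2) powr p / \<Lambda> * (\<delta> / 4) powr n \<le> 4 * 4 ^ n * \<epsilon>"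
    using alt unfolding \<rho> by linarith
  then show ?thesis using \<epsilon>(2) \<Lambda> by (auto simp: excess_threshold_def field_simps)
qed

(* P and Q are the two coordinate projections in either order: P = fst handles a source point
   in B_3, and P = snd together with the reflected cost handles a target point in B_3. *)
lemma displacement_bound_one_side:
  fixes \<pi> :: "('a::euclidean_space \<times> 'a) measure" and P Q :: "'a \<times> 'a \<Rightarrow> 'a"
  assumes c: "cost_growth_bounds p \<Lambda> c" and p: "1 < p" and \<Lambda>: "1 \<le> \<Lambda>"
    and \<theta>: "0 < \<theta>" "\<theta> \<le> 1/4" "(4 * \<theta>) powr (p - 1) * (2 * \<Lambda>) < 1 / (2 * \<Lambda>)"
    and \<delta>: "0 < \<delta>" "\<delta> \<le> 1" "\<Lambda> * 3 powr (p - 1) * \<delta> \<le> 1 / (2 * \<Lambda>)"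
    and \<epsilon>: "0 \<le> \<epsilon>" "\<epsilon> \<le> 1" "\<epsilon> < excess_threshold p \<Lambda> \<delta> DIM('a)"
    and \<pi>: "sets \<pi> = sets borel" and P: "continuous_on UNIV P"
    and D: "finite_measure (distr \<pi> borel P)" "Ddata_one p (distr \<pi> borel P) 4 \<le> ennreal \<epsilon>"
    and E: "(\<integral>\<^sup>+ u\<in>sharp 4. ennreal (c (P u - Q u)) \<partial>\<pi>) \<le> ennreal (\<epsilon> * measure lborel (ball (0::'a) 4))"
    and sharp: "\<And>u. P u \<in> ball 0 4 \<Longrightarrow> u \<in> sharp 4"
    and q0: "q0 \<in> ball 0 3" and M: "norm (q0 - q1) = M" "0 < M"
    and mono: "AE u in \<pi>. c (q0 - q1) + c (P u - Q u) \<le> c (q0 - Q u) + c (P u - q1)"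
  shows "M powr (p + DIM('a)) \<le> displacement_const p \<Lambda> \<theta> \<delta> DIM('a) * \<epsilon>"
proof -
  define \<nu> where "\<nu> = distr \<pi> borel P"
  define r where "r = min (\<theta> * M) (1/2)"
  define \<rho> where "\<rho> = \<delta> * r / 2"
  define z0 where "z0 = q0 + (r / M) *\<^sub>R (q1 - q0)"
  define L where "L = (\<theta> * M) powr p / \<Lambda>"
  have r: "0 < r" "r \<le> \<theta> * M" "r \<le> 1/2" using \<theta> M by (auto simp: r_def)
  have \<rho>: "0 < \<rho>" using \<delta> r by (simp add: \<rho>_def)
  have "norm z0 \<le> norm q0 + r"
    using norm_triangle_ineq[of q0 "(r / M) *\<^sub>R (q1 - q0)"] r M by (simp add: z0_def norm_minus_commute)
  moreover have "\<delta> * r \<le> r" using \<delta> r mult_right_mono[of \<delta> 1 r] by simp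
  ultimately have A: "ball z0 (2 * \<rho>) \<subseteq> ball 0 4"
    using q0 r(3) by (simp add: ball_subset_ball_iff \<rho>_def dist_norm)
  have "AE u in \<pi>. P u \<in> ball z0 (2 * \<rho>) \<longrightarrow> u \<in> sharp 4 \<and> L \<le> c (P u - Q u)"
    using mono
  proof (rule AE_mp, intro AE_I2 impI conjI)
    fix u assume mono: "c (q0 - q1) + c (P u - Q u) \<le> c (q0 - Q u) + c (P u - q1)"
      and near: "P u \<in> ball z0 (2 * \<rho>)"
    show "u \<in> sharp 4" using near A sharp by blast
    have "norm (P u - (q0 + (r / M) *\<^sub>R (q1 - q0))) < \<delta> * r"
      using near by (simp add: z0_def \<rho>_def dist_norm norm_minus_commute)
    then have "\<theta> * M < norm (P u - Q u)"
      by (rule c_monotone_pair_long_displacement[OF c p \<Lambda> mono M r(1,2) \<theta> \<delta>])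
    then show "L \<le> c (P u - Q u)"
      unfolding L_def using \<theta> M p \<Lambda> by (intro cost_growth_bounds_ge[OF c]) auto
  qed
  then have "ennreal L * emeasure \<nu> (ball z0 (2 * \<rho>)) \<le> ennreal (\<epsilon> * measure lborel (ball (0::'a) 4))"
    using emeasure_distr_le_set_nn_integral[OF \<pi> borel_measurable_continuous_onI[OF P]] E
    unfolding \<nu>_def by (meson borel_open open_ball order_trans)
  then have "L * measure \<nu> (ball z0 (2 * \<rho>)) \<le> \<epsilon> * measure lborel (ball (0::'a) 4)"
    using D(1) \<epsilon> \<Lambda>
    by (simp add: \<nu>_def L_def finite_measure.emeasure_eq_measure ennreal_mult'[symmetric] ennreal_le_iff)
  from Ddata_one_le_imp_ball_dichotomy[OF _ D[folded \<nu>_def] \<epsilon>(1,2) p \<rho> A _ this] \<Lambda>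
  have "\<rho> powr (p + DIM('a)) \<le> 4 * 4 ^ DIM('a) * \<epsilon> \<or> L * \<rho> powr DIM('a) \<le> 4 * 4 ^ DIM('a) * \<epsilon>"
    by (simp add: \<nu>_def L_def)
  then show ?thesis
    using displacement_power_le[OF M(2) \<theta>(1) \<delta>(1) _ _ \<epsilon>(1,3) r_def] p \<Lambda>
    by (simp add: \<rho>_def L_def)
qed

lemma Eexc_Ddata_le_imp_bounds:
  fixes c :: "'a::euclidean_space \<Rightarrow> real" and \<pi> :: "('a \<times> 'a) measure"
  assumes small: "Eexc c \<pi> R + Ddata p lam mu R \<le> ennreal \<epsilon>" and "0 \<le> \<epsilon>" "0 < R"
  shows "(\<integral>\<^sup>+ u\<in>sharp R. ennreal (c (fst u - snd u)) \<partial>\<pi>) \<le> ennreal (\<epsilon> * measure lborel (ball (0::'a) R))"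
    and "Ddata_one p lam R \<le> ennreal \<epsilon>" and "Ddata_one p mu R \<le> ennreal \<epsilon>"
proof -
  have "Eexc c \<pi> R \<le> Eexc c \<pi> R + Ddata p lam mu R"
    and D: "Ddata p lam mu R \<le> Eexc c \<pi> R + Ddata p lam mu R"
    and "Ddata_one p lam R \<le> Ddata p lam mu R" and "Ddata_one p mu R \<le> Ddata p lam mu R"
    by (simp_all add: Ddata_def add_increasing add_increasing2)
  note small = this(1)[THEN order_trans, OF small] this(3,4)[THEN order_trans, OF D[THEN order_trans, OF small]]
  then show "Ddata_one p lam R \<le> ennreal \<epsilon>" and "Ddata_one p mu R \<le> ennreal \<epsilon>" by blast+
  show "(\<integral>\<^sup>+ u\<in>sharp R. ennreal (c (fst u - snd u)) \<partial>\<pi>) \<le> ennreal (\<epsilon> * measure lborel (ball (0::'a) R))"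
    using small(1) assms(2,3) by (intro ennreal_le_mult_if_divide_le) (simp_all add: Eexc_def content_ball_pos)
qed

lemma support_displacement_bound:
  fixes c :: "'a::euclidean_space \<Rightarrow> real" and lam mu :: "'a measure" and pi :: "('a \<times> 'a) measure"
  assumes c: "cost_growth_bounds p \<Lambda> c" and p: "1 < p" and \<Lambda>: "1 \<le> \<Lambda>"
    and \<theta>: "0 < \<theta>" "\<theta> \<le> 1/4" "(4 * \<theta>) powr (p - 1) * (2 * \<Lambda>) < 1 / (2 * \<Lambda>)"
    and \<delta>: "0 < \<delta>" "\<delta> \<le> 1" "\<Lambda> * 3 powr (p - 1) * \<delta> \<le> 1 / (2 * \<Lambda>)"
    and \<epsilon>: "0 \<le> \<epsilon>" "\<epsilon> \<le> 1" "\<epsilon> < excess_threshold p \<Lambda> \<delta> DIM('a)"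
    and lam: "finite_measure lam" and mu: "finite_measure mu"
    and pi: "pi \<in> couplings lam mu" and cyc: "c_cyclically_monotone c (Spt pi)"
    and small: "Eexc c pi 4 + Ddata p lam mu 4 \<le> ennreal \<epsilon>"
    and xy: "(x, y) \<in> Spt pi" "x \<in> ball 0 3 \<or> y \<in> ball 0 3"
  shows "norm (x - y) powr (p + DIM('a)) \<le> displacement_const p \<Lambda> \<theta> \<delta> DIM('a) * \<epsilon>"
proof -
  have sets: "sets pi = sets borel" and lam_eq: "distr pi borel fst = lam" and mu_eq: "distr pi borel snd = mu"
    using pi unfolding couplings_def by auto
  note small = Eexc_Ddata_le_imp_bounds[OF small \<epsilon>(1), simplified]
  have mono: "AE u in pi. c (x - y) + c (fst u - snd u) \<le> c (x - snd u) + c (fst u - y)"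
    using AE_in_Spt[OF sets] by eventually_elim (use c_cyclically_monotone_pair[OF cyc xy(1)] in auto)
  have fst: "continuous_on UNIV (fst :: 'a \<times> 'a \<Rightarrow> 'a)" and snd: "continuous_on UNIV (snd :: 'a \<times> 'a \<Rightarrow> 'a)"
    by (intro continuous_intros)+
  consider "x = y" | "x \<noteq> y" "x \<in> ball 0 3" | "x \<noteq> y" "y \<in> ball 0 3" using xy(2) by blast
  then show ?thesis
  proof cases
    case 1
    then show ?thesis
      using \<epsilon>(1) displacement_const_pos[OF \<theta>(1) \<delta>(1), THEN less_imp_le] by simp
  next
    case 2
    then have "0 < norm (x - y)" by simp
    from displacement_bound_one_side[OF c p \<Lambda> \<theta> \<delta> \<epsilon> sets fst _ _ small(1) _ _ refl this mono]
    show ?thesis using lam_eq lam small(2) 2 by (auto simp: sharp_def)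
  next
    case 3
    then have "0 < norm (y - x)" by simp
    moreover have "(\<integral>\<^sup>+ u\<in>sharp 4. ennreal (c (- (snd u - fst u))) \<partial>pi)
                     \<le> ennreal (\<epsilon> * measure lborel (ball (0::'a) 4))"
      using small(1) by simp
    moreover have "AE u in pi. c (- (y - x)) + c (- (snd u - fst u)) \<le> c (- (y - fst u)) + c (- (snd u - x))"
      using mono by (simp add: add.commute)
    ultimately have "norm (y - x) powr (p + DIM('a)) \<le> displacement_const p \<Lambda> \<theta> \<delta> DIM('a) * \<epsilon>"
      using displacement_bound_one_side[OF cost_growth_bounds_uminus[OF c] p \<Lambda> \<theta> \<delta> \<epsilon> sets snd]
        mu_eq mu small(3) 3 by (auto simp: sharp_def)
    then show ?thesis by (simp add: norm_minus_commute)
  qed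
qed

lemma exists_displacement_parameters:
  assumes p: "1 < p" and \<Lambda>: "1 \<le> \<Lambda>"
  obtains \<theta> \<delta> :: real
  where "0 < \<theta>" "\<theta> \<le> 1/4" "(4 * \<theta>) powr (p - 1) * (2 * \<Lambda>) < 1 / (2 * \<Lambda>)"
    and "0 < \<delta>" "\<delta> \<le> 1" "\<Lambda> * 3 powr (p - 1) * \<delta> \<le> 1 / (2 * \<Lambda>)"
proof
  define \<theta> where "\<theta> = (1 / (8 * \<Lambda>\<^sup>2)) powr (1 / (p - 1)) / 4"
  define \<delta> where "\<delta> = 1 / (2 * \<Lambda>\<^sup>2 * 3 powr (p - 1))"
  have \<Lambda>2: "1 \<le> \<Lambda>\<^sup>2" and "1 \<le> 3 powr (p - 1)"
    using \<Lambda> p by (simp_all add: one_le_power ge_one_powr_ge_zero)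
  show "0 < \<theta>" using \<Lambda> by (simp add: \<theta>_def)
  have "1 / (8 * \<Lambda>\<^sup>2) \<le> 1" using \<Lambda>2 by (simp add: divide_le_eq)
  then have "(1 / (8 * \<Lambda>\<^sup>2)) powr (1 / (p - 1)) \<le> 1"
    using p by (intro powr_le1) auto
  then show "\<theta> \<le> 1/4" by (simp add: \<theta>_def)
  have "(4 * \<theta>) powr (p - 1) = 1 / (8 * \<Lambda>\<^sup>2)"
    using p \<Lambda> by (simp add: \<theta>_def powr_powr)
  then show "(4 * \<theta>) powr (p - 1) * (2 * \<Lambda>) < 1 / (2 * \<Lambda>)"
    using \<Lambda> by (simp add: field_simps power2_eq_square)
  show "0 < \<delta>" "\<delta> \<le> 1" "\<Lambda> * 3 powr (p - 1) * \<delta> \<le> 1 / (2 * \<Lambda>)"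
    using \<Lambda> \<Lambda>2 \<open>1 \<le> 3 powr (p - 1)\<close>
    by (auto simp: \<delta>_def field_simps power2_eq_square intro: order_trans[OF _ mult_mono])
qed

lemma le_powr_root_if_powr_le:
  fixes M q K \<epsilon> :: real
  assumes "0 \<le> M" "0 < q" "M powr q \<le> K * \<epsilon>" "0 \<le> K" "0 \<le> \<epsilon>"
  shows "M \<le> K powr (1 / q) * \<epsilon> powr (1 / q)"
proof -
  have "M = (M powr q) powr (1 / q)" using assms(1,2) by (simp add: powr_powr)
  also have "\<dots> \<le> (K * \<epsilon>) powr (1 / q)" using assms(2,3) by (intro powr_mono2) auto
  finally show ?thesis using assms(4,5) by (simp add: powr_mult)
qed

lemma segment_mem_ball_if_endpoint_mem:
  fixes x y a :: "'a::real_normed_vector"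
  assumes "x \<in> ball a r \<or> y \<in> ball a r" "norm (x - y) \<le> s" "t \<in> {0..1}"
  shows "(1 - t) *\<^sub>R x + t *\<^sub>R y \<in> ball a (r + s)"
proof -
  have "(1 - t) *\<^sub>R x + t *\<^sub>R y = x + t *\<^sub>R (y - x)" "(1 - t) *\<^sub>R x + t *\<^sub>R y = y + (1 - t) *\<^sub>R (x - y)"
    by (simp_all add: algebra_simps)
  moreover have "norm (t *\<^sub>R (y - x)) \<le> s" "norm ((1 - t) *\<^sub>R (x - y)) \<le> s"
    using assms(2,3) by (auto simp: norm_minus_commute intro: order_trans[OF mult_left_le_one_le])
  ultimately show ?thesis
    using assms(1) dist_triangle[of a _ x] dist_triangle[of a _ y]
    by (smt (verit) dist_norm mem_ball norm_minus_commute add_diff_cancel_left')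
qed

lemma support_displacement_root_bound:
  fixes c :: "'a::euclidean_space \<Rightarrow> real" and lam mu :: "'a measure" and pi :: "('a \<times> 'a) measure"
  assumes p: "1 < p" and \<Lambda>: "1 \<le> \<Lambda>"
    and \<theta>: "0 < \<theta>" "\<theta> \<le> 1/4" "(4 * \<theta>) powr (p - 1) * (2 * \<Lambda>) < 1 / (2 * \<Lambda>)"
    and \<delta>: "0 < \<delta>" "\<delta> \<le> 1" "\<Lambda> * 3 powr (p - 1) * \<delta> \<le> 1 / (2 * \<Lambda>)"
    and K: "K = displacement_const p \<Lambda> \<theta> \<delta> DIM('a)"
    and \<epsilon>0: "0 < \<epsilon>0" "\<epsilon>0 \<le> 1" "\<epsilon>0 < excess_threshold p \<Lambda> \<delta> DIM('a)" "K * \<epsilon>0 < 1"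
    and data: "cost_assms p \<Lambda> c g" "finite_measure lam" "finite_measure mu" "pi \<in> couplings lam mu"
      "c_cyclically_monotone c (Spt pi)"
    and small: "Eexc c pi 4 + Ddata p lam mu 4 \<le> ennreal \<epsilon>0"
    and xy: "(x, y) \<in> Spt pi" "x \<in> ball 0 3 \<or> y \<in> ball 0 3"
  shows "norm (x - y) \<le> K powr (1 / (p + DIM('a))) * enn2real (Eexc c pi 4 + Ddata p lam mu 4) powr (1 / (p + DIM('a)))
         \<and> (\<forall>t\<in>{0..1}. (1 - t) *\<^sub>R x + t *\<^sub>R y \<in> ball 0 4)"
proof -
  define \<epsilon> where "\<epsilon> = enn2real (Eexc c pi 4 + Ddata p lam mu 4)"
  have "Eexc c pi 4 + Ddata p lam mu 4 < top" using small by (rule le_less_trans) simp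
  then have \<epsilon>: "Eexc c pi 4 + Ddata p lam mu 4 = ennreal \<epsilon>" "0 \<le> \<epsilon>" "\<epsilon> \<le> \<epsilon>0"
    using small \<epsilon>0(1) by (simp_all add: \<epsilon>_def enn2real_leI)
  have K0: "0 < K" using displacement_const_pos[OF \<theta>(1) \<delta>(1)] by (simp add: K)
  have bound: "norm (x - y) powr (p + DIM('a)) \<le> K * \<epsilon>"
    unfolding K using \<epsilon> \<epsilon>0 data xy \<Lambda>
    by (intro support_displacement_bound[OF cost_assms_imp_cost_growth_bounds p \<Lambda> \<theta> \<delta>]) auto
  also have "\<dots> < 1" using \<epsilon>(3) \<epsilon>0(4) K0 by (smt (verit) mult_left_mono)
  finally have "norm (x - y) \<le> 1" using p by (smt (verit) ge_one_powr_ge_zero of_nat_0_le_iff)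
  with segment_mem_ball_if_endpoint_mem[OF xy(2) this] show ?thesis
    using bound K0 p \<epsilon>(2) by (auto simp: \<epsilon>_def le_powr_root_if_powr_le)
qed

theorem lemma3p1:
  fixes p \<Lambda> :: real
  assumes "1 < p" and "\<Lambda> \<ge> 1"
  shows "\<exists>\<epsilon>0>0. \<exists>C>0. \<forall>(c :: 'a::euclidean_space \<Rightarrow> real) g (lam :: 'a measure) (mu :: 'a measure)
            (pi :: ('a \<times> 'a) measure).
     cost_assms p \<Lambda> c g \<and>
     sets lam = sets borel \<and> sets mu = sets borel \<and> finite_measure lam \<and> finite_measure mu \<and>
     emeasure lam UNIV = emeasure mu UNIV \<and>
     pi \<in> couplings lam mu \<and> c_cyclically_monotone c (Spt pi) \<and>
     Eexc c pi 4 + Ddata p lam mu 4 \<le> ennreal \<epsilon>0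
     \<longrightarrow> (\<forall>x y. (x, y) \<in> Spt pi \<and> (x \<in> ball 0 3 \<or> y \<in> ball 0 3) \<longrightarrow>
            norm (x - y) \<le> C * enn2real (Eexc c pi 4 + Ddata p lam mu 4) powr (1 / (p + real DIM('a))) \<and>
            (\<forall>t\<in>{0..1}. (1 - t) *\<^sub>R x + t *\<^sub>R y \<in> ball 0 4))"
proof -
  obtain \<theta> \<delta> where \<theta>: "0 < \<theta>" "\<theta> \<le> 1/4" "(4 * \<theta>) powr (p - 1) * (2 * \<Lambda>) < 1 / (2 * \<Lambda>)"
    and \<delta>: "0 < \<delta>" "\<delta> \<le> 1" "\<Lambda> * 3 powr (p - 1) * \<delta> \<le> 1 / (2 * \<Lambda>)"
    using exists_displacement_parameters[OF assms] .
  define K where "K = displacement_const p \<Lambda> \<theta> \<delta> DIM('a)"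
  define \<epsilon>0 where "\<epsilon>0 = min 1 (min (excess_threshold p \<Lambda> \<delta> DIM('a) / 2) (1 / (2 * K)))"
  have K: "0 < K" using displacement_const_pos[OF \<theta>(1) \<delta>(1)] by (simp add: K_def)
  have "0 < excess_threshold p \<Lambda> \<delta> DIM('a)" using excess_threshold_pos \<delta>(1) assms(2) by simp
  moreover have "K * \<epsilon>0 \<le> K * (1 / (2 * K))" using K by (intro mult_left_mono) (auto simp: \<epsilon>0_def)
  ultimately have \<epsilon>0: "0 < \<epsilon>0" "\<epsilon>0 \<le> 1" "\<epsilon>0 < excess_threshold p \<Lambda> \<delta> DIM('a)" "K * \<epsilon>0 < 1"
    using K by (auto simp: \<epsilon>0_def)
  have C: "0 < K powr (1 / (p + DIM('a)))" using K by simp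
  note bound = support_displacement_root_bound[OF assms \<theta> \<delta> K_def \<epsilon>0]
  show ?thesis
    by (rule exI[of _ \<epsilon>0], intro conjI \<epsilon>0(1) exI[of _ "K powr (1 / (p + DIM('a)))"] C allI impI)
       (use bound in blast)+
qed

end
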